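(* Let $B>0$ and $\beta>0$. Then $\mathcal{M}_{B,\beta}$ is equal in distribution to $\mathcal{M}_{B,\mathrm{flip}}\circ\mathcal{M}_{B,0}$; that is, for every $\boldsymbol g\in\mathbb{R}^d$ and every coordinate $i\in[d]$, $\Pr\big[[\mathcal{M}_{B,\beta}]_i(\boldsymbol g)=1\big]=\Pr\big[\mathcal{M}_{B,\mathrm{flip}}\big([\mathcal{M}_{B,0}]_i(\boldsymbol g)\big)=1\big]$, where the flip is applied independently of the randomness of $\mathcal{M}_{B,0}$.
   Context: For $B>0$, $\mathrm{clip}\{g,B\}=\max\{-B,\min\{B,g\}\}$. For $\beta\ge0$, the randomized compressor $\mathcal{M}_{B,\beta}:\mathbb{R}^d\to\{-1,1\}^d$ acts independently on each coordinate: $[\mathcal{M}_{B,\beta}]_i(\boldsymbol g)=1$ with probability $\frac{B+\beta+\mathrm{clip}\{g_i,B\}}{2B+2\beta}$ and $=-1$ otherwise. The DP-flip mechanism $\mathcal{M}_{B,\mathrm{flip}}:\{-1,1\}\to\{-1,1\}$ (depending on $B$ and $\beta$) maps $b\in\{-1,1\}$ to $b$ with probability $\frac{2B+\beta}{2(B+\beta)}$ and to $-b$ otherwise; $\mathcal{M}_{B,\mathrm{flip}}\circ\mathcal{M}_{B,0}$ applies it coordinate-wise to the output of $\mathcal{M}_{B,0}$. *)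

theory Defs
  imports "HOL-Analysis.Analysis" "HOL-Probability.Probability"
begin

definition clip :: "real \<Rightarrow> real \<Rightarrow> real" where
  "clip g B = max (- B) (min B g)"

definition comp_coord :: "real \<Rightarrow> real \<Rightarrow> real \<Rightarrow> int pmf" where
  "comp_coord B \<beta> x =
     map_pmf (\<lambda>b. if b then 1 else -1) (bernoulli_pmf ((B + \<beta> + clip x B) / (2*B + 2*\<beta>)))"

definition compressor :: "real \<Rightarrow> real \<Rightarrow> real^'n::finite \<Rightarrow> ('n \<Rightarrow> int) pmf" where
  "compressor B \<beta> g = Pi_pmf UNIV 0 (\<lambda>i. comp_coord B \<beta> (g $ i))"

definition dp_flip :: "real \<Rightarrow> real \<Rightarrow> int \<Rightarrow> int pmf" where
  "dp_flip B \<beta> b = map_pmf (\<lambda>k. if k then b else - b) (bernoulli_pmf ((2*B + \<beta>) / (2*(B + \<beta>))))"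

definition flip_comp :: "real \<Rightarrow> real \<Rightarrow> real^'n::finite \<Rightarrow> ('n \<Rightarrow> int) pmf" where
  "flip_comp B \<beta> g = compressor B 0 g \<bind> (\<lambda>v. Pi_pmf UNIV 0 (\<lambda>i. dp_flip B \<beta> (v i)))"

end

theory Submission
  imports Defs
begin

text \<open>Flipping a
  Bernoulli(p) bit with keep-probability q gives a Bernoulli(pq + (1-p)(1-q)) bit, and with
  p = (B + c)/(2B) and q = (2B + \<beta>)/(2(B + \<beta>)) this parameter is exactly
  (B + \<beta> + c)/(2B + 2\<beta>), where c is the clipped coordinate. Independence across
  coordinates is preserved because binding a product distribution into coordinatewise
  kernels is again a product distribution.\<close>

lemma bind_bernoulli_flip:
  fixes p q :: real
  assumes "0 \<le> p" "p \<le> 1" "0 \<le> q" "q \<le> 1"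
  shows "bernoulli_pmf p \<bind> (\<lambda>b. map_pmf (\<lambda>k. k = b) (bernoulli_pmf q))
       = bernoulli_pmf (p * q + (1 - p) * (1 - q))"
proof (rule pmf_eqI)
  have "0 \<le> p * q + (1 - p) * (1 - q)" "p * q + (1 - p) * (1 - q) \<le> 1"
    using convex_bound_le[of q 1 "1 - q" p "1 - p"] assms by simp_all
  then show "pmf (bernoulli_pmf p \<bind> (\<lambda>b. map_pmf (\<lambda>k. k = b) (bernoulli_pmf q))) b
           = pmf (bernoulli_pmf (p * q + (1 - p) * (1 - q))) b" for b
    by (cases b) (simp_all add: pmf_bind pmf_map vimage_def measure_pmf_single assms algebra_simps)
qed

lemma clip_bounds:
  assumes "0 \<le> B"
  shows "- B \<le> clip x B" "clip x B \<le> B"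
  using assms by (auto simp: clip_def)

lemma compressor_bias_decomposition:
  fixes B \<beta> c :: real
  assumes "B > 0" "\<beta> > 0"
  defines "p \<equiv> (B + c) / (2 * B)" and "q \<equiv> (2 * B + \<beta>) / (2 * (B + \<beta>))"
  shows "(B + \<beta> + c) / (2 * B + 2 * \<beta>) = p * q + (1 - p) * (1 - q)"
  using assms by (simp add: divide_simps) (simp add: algebra_simps)

lemma comp_coord_eq_flip:
  assumes "B > 0" "\<beta> > 0"
  shows "comp_coord B \<beta> x = comp_coord B 0 x \<bind> dp_flip B \<beta>"
proof -
  define sgn_code :: "bool \<Rightarrow> int" where "sgn_code = (\<lambda>b. if b then 1 else -1)"
  define p where "p = (B + clip x B) / (2 * B)"
  define q where "q = (2 * B + \<beta>) / (2 * (B + \<beta>))"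
  have p: "0 \<le> p" "p \<le> 1"
    using assms clip_bounds[of B x] by (auto simp: p_def field_simps)
  have q: "0 \<le> q" "q \<le> 1"
    using assms by (auto simp: q_def field_simps)
  have flip_sgn_code:
    "dp_flip B \<beta> (sgn_code b) = map_pmf sgn_code (map_pmf (\<lambda>k. k = b) (bernoulli_pmf q))" for b
    by (cases b) (auto simp: dp_flip_def q_def sgn_code_def pmf.map_comp intro!: map_pmf_cong)
  have "comp_coord B 0 x \<bind> dp_flip B \<beta>
      = map_pmf sgn_code (bernoulli_pmf p \<bind> (\<lambda>b. map_pmf (\<lambda>k. k = b) (bernoulli_pmf q)))"
    by (simp add: comp_coord_def p_def flip_sgn_code bind_map_pmf map_bind_pmf
        flip: sgn_code_def)
  also have "\<dots> = map_pmf sgn_code (bernoulli_pmf (p * q + (1 - p) * (1 - q)))"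
    using p q by (simp add: bind_bernoulli_flip)
  also have "\<dots> = comp_coord B \<beta> x"
    using compressor_bias_decomposition[OF assms, of "clip x B"]
    by (simp add: comp_coord_def p_def q_def sgn_code_def)
  finally show ?thesis ..
qed

theorem proposition1:
  fixes B \<beta> :: real and g :: "real^'n::finite"
  assumes "B > 0" and "\<beta> > 0"
  shows "compressor B \<beta> g = flip_comp B \<beta> g
         \<and> (\<forall>i. measure_pmf.prob (compressor B \<beta> g) {v. v i = 1}
                = measure_pmf.prob (flip_comp B \<beta> g) {v. v i = 1})"
proof -
  have "compressor B \<beta> g = Pi_pmf UNIV 0 (\<lambda>i. comp_coord B 0 (g $ i) \<bind> dp_flip B \<beta>)"
    unfolding compressor_def using comp_coord_eq_flip[OF assms] by simp
  also have "\<dots> = flip_comp B \<beta> g"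
    unfolding flip_comp_def compressor_def by (rule Pi_pmf_bind) simp
  finally show ?thesis by simp
qed

end
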